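(* Let $(X,d)$ be a metric space, let $\mathcal F\subseteq\mathcal S$ be nonempty, and let $V\subseteq X$ be open with $V\subseteq\overline{A_{\mathcal F}(u,\le t)}$ for all $u\in V$ and all $t>0$. Then $V\subseteq\overline{A_{\mathcal F}(u,t)}$ for all $u\in V$ and all $t>0$. In particular, if $\overline{A_{\operatorname{Sat}(\mathcal F)}(u,\le t)}=X$ for all $u\in X$, $t>0$, then $\overline{A_{\mathcal F}(u,t)}=X$ for all $u\in X$, $t>0$.
   Context: Let $(X,d)$ be a metric space and $\dagger\notin X$ an extra point. A continuous local semigroup on $X$ is a map $(t,u)\mapsto\Phi_tu:[0,\infty)\times X\to X\cup\{\dagger\}$ such that for every $u\in X$ there is $T_u\in(0,\infty]$ with: (i) $\Phi_tu\in X$ for $t<T_u$ and $\Phi_tu=\dagger$ for $t\ge T_u$; (ii) $\Phi_0u=u$, and whenever $s,t\ge 0$ with $s+t<T_u$ one has $t<T_{\Phi_su}$ and $\Phi_{t+s}u=\Phi_t\Phi_su$; (iii) for every $t<T_u$ and $\varepsilon>0$ there is $\delta>0$ such that $|t-t'|+d(u,u')<\delta$ implies $t'<T_{u'}$ and $d(\Phi_tu,\Phi_{t'}u')<\varepsilon$. $\mathcal S$ is the set of all such. Compositions $\Phi^n_{t_n}\cdots\Phi^1_{t_1}u$ are only considered when every partial composition lies in $X$. For $\mathcal F\subseteq\mathcal S$: $A_{\mathcal F}(u,t)=\{\Phi^n_{t_n}\cdots\Phi^1_{t_1}u:\Phi^j\in\mathcal F,\ t_j>0,\ \sum_jt_j=t\}$,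 $A_{\mathcal F}(u,\le t)=\bigcup_{0<s\le t}A_{\mathcal F}(u,s)$. $\mathcal F\preccurlyeq\mathcal G$ means $\overline{A_{\mathcal F}(u,\le t)}\subseteq\overline{A_{\mathcal G}(u,\le t)}$ for all $u\in X,t>0$, and $\operatorname{Sat}(\mathcal F)=\bigcup_{\mathcal G\preccurlyeq\mathcal F}\mathcal G$. *)

theory Defs
  imports "HOL-Analysis.Analysis"
begin

text \<open>The metric space X is the whole type 'a; the extra point (dagger) is None.
  A local semigroup is a map Phi :: real => 'a => 'a option (only t >= 0 matters).\<close>

type_synonym 'a lsg = "real \<Rightarrow> 'a \<Rightarrow> 'a option"

definition local_semigroup :: "('a::metric_space) lsg \<Rightarrow> bool" where
  "local_semigroup \<Phi> \<longleftrightarrow> (\<exists>T :: 'a \<Rightarrow> ereal.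
     (\<forall>u. T u > 0 \<and> (\<forall>t\<ge>0. (\<Phi> t u \<noteq> None \<longleftrightarrow> ereal t < T u))) \<and>
     (\<forall>u. \<Phi> 0 u = Some u) \<and>
     (\<forall>u s t. s \<ge> 0 \<and> t \<ge> 0 \<and> ereal (s + t) < T u \<longrightarrow>
        ereal t < T (the (\<Phi> s u)) \<and> \<Phi> (t + s) u = \<Phi> t (the (\<Phi> s u))) \<and>
     (\<forall>u t \<epsilon>. t \<ge> 0 \<and> ereal t < T u \<and> \<epsilon> > 0 \<longrightarrow>
        (\<exists>\<delta>>0. \<forall>t' u'. t' \<ge> 0 \<and> \<bar>t - t'\<bar> + dist u u' < \<delta> \<longrightarrow>
           ereal t' < T u' \<and> dist (the (\<Phi> t u)) (the (\<Phi> t' u')) < \<epsilon>)))"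

definition SG :: "('a::metric_space) lsg set" where
  "SG = {\<Phi>. local_semigroup \<Phi>}"

fun run :: "('a lsg \<times> real) list \<Rightarrow> 'a \<Rightarrow> 'a option" where
  "run [] u = Some u"
| "run ((\<Phi>, t) # ps) u = (case \<Phi> t u of None \<Rightarrow> None | Some v \<Rightarrow> run ps v)"

definition reach :: "('a::metric_space) lsg set \<Rightarrow> 'a \<Rightarrow> real \<Rightarrow> 'a set" where
  "reach F u t = {v. \<exists>ps. (\<forall>p\<in>set ps. fst p \<in> F \<and> snd p > 0) \<and>
                       sum_list (map snd ps) = t \<and> run ps u = Some v}"

definition reach_le :: "('a::metric_space) lsg set \<Rightarrow> 'a \<Rightarrow> real \<Rightarrow> 'a set" where
  "reach_le F u t = (\<Union>s\<in>{0<..t}. reach F u s)"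

definition sg_preceq :: "('a::metric_space) lsg set \<Rightarrow> 'a lsg set \<Rightarrow> bool" where
  "sg_preceq F G \<longleftrightarrow> (\<forall>u t. t > 0 \<longrightarrow> closure (reach_le F u t) \<subseteq> closure (reach_le G u t))"

definition Sat :: "('a::metric_space) lsg set \<Rightarrow> 'a lsg set" where
  "Sat F = \<Union> {G. G \<subseteq> SG \<and> sg_preceq G F}"

end

theory Submission
  imports Defs
begin

text \<open>Fix a target point w of V and a ball around it inside V. Any member of F, run for a short
  time from a point close to w, stays inside that ball. Since w lies in the closure of
  reach_le F x r for every x in V, one can first come close to w at some time s \<le> r and then
  either flow the remaining time r - s (if it is short) or flow a fixed short time and restart
  from the new point of V; this reaches w approximately at the exact time r. For the saturation,
  the definition of Sat F directly gives that each flow of a member of Sat F is approximated by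
  F-reachable points, and continuity of the flows propagates this along compositions.\<close>

lemma run_append:
  "run (ps @ qs) u = (case run ps u of None \<Rightarrow> None | Some v \<Rightarrow> run qs v)"
  by (induction ps arbitrary: u) (auto split: option.split)

lemma reach_trans:
  assumes "v \<in> reach F u s" and "z \<in> reach F v r"
  shows "z \<in> reach F u (s + r)"
proof -
  obtain ps where "\<forall>p\<in>set ps. fst p \<in> F \<and> snd p > 0" "sum_list (map snd ps) = s"
    "run ps u = Some v"
    using assms(1) unfolding reach_def by blast
  moreover obtain qs where "\<forall>p\<in>set qs. fst p \<in> F \<and> snd p > 0" "sum_list (map snd qs) = r"
    "run qs v = Some z"
    using assms(2) unfolding reach_def by blast
  ultimately show ?thesis
    unfolding reach_def by (intro CollectI exI[of _ "ps @ qs"]) (auto simp: run_append)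
qed

lemma reach_singleton: "\<Phi> \<in> F \<Longrightarrow> \<tau> > 0 \<Longrightarrow> \<Phi> \<tau> u = Some v \<Longrightarrow> v \<in> reach F u \<tau>"
  unfolding reach_def by (intro CollectI exI[of _ "[(\<Phi>, \<tau>)]"]) auto

lemma reach_le_trans:
  assumes "x \<in> insert u (reach_le F u s)" and "z \<in> reach_le F x r" and "s \<ge> 0"
  shows "z \<in> reach_le F u (s + r)"
proof (cases "x = u")
  case True
  then show ?thesis
    using assms(2,3) unfolding reach_le_def by force
next
  case False
  then obtain s' where "0 < s'" "s' \<le> s" "x \<in> reach F u s'"
    using assms(1) unfolding reach_le_def by auto
  moreover obtain r' where "0 < r'" "r' \<le> r" "z \<in> reach F x r'"
    using assms(2) unfolding reach_le_def by auto
  ultimately show ?thesis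
    using reach_trans[of x F u s' z r'] unfolding reach_le_def by force
qed

lemma local_semigroup_zero: "local_semigroup \<Phi> \<Longrightarrow> \<Phi> 0 u = Some u"
  unfolding local_semigroup_def by blast

lemma local_semigroup_continuous:
  assumes "local_semigroup \<Phi>" and "\<tau> \<ge> 0" and "\<Phi> \<tau> x = Some v" and "e > 0"
  obtains \<delta> where "\<delta> > 0"
    "\<And>t' x'. t' \<ge> 0 \<Longrightarrow> \<bar>\<tau> - t'\<bar> + dist x x' < \<delta> \<Longrightarrow> \<exists>v'. \<Phi> t' x' = Some v' \<and> dist v v' < e"
proof -
  obtain T :: "'a \<Rightarrow> ereal" where
    T_life: "\<forall>u. T u > 0 \<and> (\<forall>t\<ge>0. \<Phi> t u \<noteq> None \<longleftrightarrow> ereal t < T u)" and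
    T_cont: "\<forall>u t \<epsilon>. t \<ge> 0 \<and> ereal t < T u \<and> \<epsilon> > 0 \<longrightarrow>
        (\<exists>\<delta>>0. \<forall>t' u'. t' \<ge> 0 \<and> \<bar>t - t'\<bar> + dist u u' < \<delta> \<longrightarrow>
           ereal t' < T u' \<and> dist (the (\<Phi> t u)) (the (\<Phi> t' u')) < \<epsilon>)"
    using assms(1) unfolding local_semigroup_def by blast
  have "ereal \<tau> < T x"
    using T_life assms(2,3) by auto
  then obtain \<delta> where "\<delta> > 0" and \<delta>: "\<forall>t' u'. t' \<ge> 0 \<and> \<bar>\<tau> - t'\<bar> + dist x u' < \<delta> \<longrightarrow>
      ereal t' < T u' \<and> dist (the (\<Phi> \<tau> x)) (the (\<Phi> t' u')) < e"
    using T_cont assms(2,4) by blast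
  show thesis
  proof (rule that[OF \<open>\<delta> > 0\<close>])
    fix t' x' assume "t' \<ge> 0" "\<bar>\<tau> - t'\<bar> + dist x x' < \<delta>"
    then show "\<exists>v'. \<Phi> t' x' = Some v' \<and> dist v v' < e"
      using \<delta> T_life assms(3) by fastforce
  qed
qed

lemma local_semigroup_near_start:
  assumes "local_semigroup \<Phi>" and "e > 0"
  obtains \<delta> where "\<delta> > 0"
    "\<And>\<tau> y. 0 \<le> \<tau> \<Longrightarrow> \<tau> < \<delta> \<Longrightarrow> dist w y < \<delta> \<Longrightarrow> \<exists>z. \<Phi> \<tau> y = Some z \<and> dist w z < e"
proof -
  obtain \<delta> where "\<delta> > 0" and \<delta>:
    "\<And>t' x'. t' \<ge> 0 \<Longrightarrow> \<bar>0 - t'\<bar> + dist w x' < \<delta> \<Longrightarrow> \<exists>v'. \<Phi> t' x' = Some v' \<and> dist w v' < e"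
    using local_semigroup_continuous[OF assms(1) order_refl local_semigroup_zero[OF assms(1)] assms(2)]
    by blast
  show thesis
    by (rule that[of "\<delta> / 2"]) (use \<open>\<delta> > 0\<close> \<delta> in auto)
qed

lemma local_semigroup_closure_image:
  assumes "local_semigroup \<Phi>" and "\<tau> \<ge> 0" and "x \<in> closure A" and "\<Phi> \<tau> x = Some v"
  shows "v \<in> closure {v'. \<exists>x'\<in>A. \<Phi> \<tau> x' = Some v'}"
  unfolding closure_approachable
proof (intro allI impI)
  fix e :: real assume "e > 0"
  obtain \<delta> where "\<delta> > 0" and \<delta>:
    "\<And>t' x'. t' \<ge> 0 \<Longrightarrow> \<bar>\<tau> - t'\<bar> + dist x x' < \<delta> \<Longrightarrow> \<exists>v'. \<Phi> t' x' = Some v' \<and> dist v v' < e"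
    using local_semigroup_continuous[OF assms(1,2,4) \<open>e > 0\<close>] by blast
  obtain x' where "x' \<in> A" "dist x x' < \<delta>"
    using closure_approachableD[OF assms(3) \<open>\<delta> > 0\<close>] by blast
  then obtain v' where "\<Phi> \<tau> x' = Some v'" "dist v v' < e"
    using \<delta>[of \<tau> x'] assms(2) by auto
  then show "\<exists>y\<in>{v'. \<exists>x'\<in>A. \<Phi> \<tau> x' = Some v'}. dist y v < e"
    using \<open>x' \<in> A\<close> by (auto simp: dist_commute)
qed

lemma mem_closure_reach_le_self:
  assumes "F \<subseteq> SG" and "F \<noteq> {}" and "t > 0"
  shows "u \<in> closure (reach_le F u t)"
  unfolding closure_approachable
proof (intro allI impI)
  fix e :: real assume "e > 0"
  obtain \<Phi> where "\<Phi> \<in> F"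
    using assms(2) by blast
  then have "local_semigroup \<Phi>"
    using assms(1) unfolding SG_def by blast
  then obtain \<delta> where "\<delta> > 0" and \<delta>:
    "\<And>\<tau> y. 0 \<le> \<tau> \<Longrightarrow> \<tau> < \<delta> \<Longrightarrow> dist u y < \<delta> \<Longrightarrow> \<exists>z. \<Phi> \<tau> y = Some z \<and> dist u z < e"
    using local_semigroup_near_start \<open>e > 0\<close> by blast
  define \<tau> where "\<tau> = min (\<delta> / 2) t"
  have "0 < \<tau>" "\<tau> \<le> t" "\<tau> < \<delta>"
    using \<open>\<delta> > 0\<close> assms(3) unfolding \<tau>_def by auto
  then obtain v where "\<Phi> \<tau> u = Some v" "dist u v < e"
    using \<delta>[of \<tau> u] \<open>\<delta> > 0\<close> by auto
  moreover have "v \<in> reach_le F u t"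
    using reach_singleton[OF \<open>\<Phi> \<in> F\<close> \<open>0 < \<tau>\<close> \<open>\<Phi> \<tau> u = Some v\<close>] \<open>0 < \<tau>\<close> \<open>\<tau> \<le> t\<close>
    unfolding reach_le_def by auto
  ultimately show "\<exists>y\<in>reach_le F u t. dist y u < e"
    by (auto simp: dist_commute)
qed

lemma local_semigroup_Sat: "\<Phi> \<in> Sat F \<Longrightarrow> local_semigroup \<Phi>"
  unfolding Sat_def SG_def by blast

lemma Sat_flow_mem_closure_reach_le:
  assumes "\<Phi> \<in> Sat F" and "\<tau> > 0" and "\<Phi> \<tau> x = Some v"
  shows "v \<in> closure (reach_le F x \<tau>)"
proof -
  obtain G where "sg_preceq G F" "\<Phi> \<in> G"
    using assms(1) unfolding Sat_def by blast
  have "v \<in> reach_le G x \<tau>"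
    using reach_singleton[OF \<open>\<Phi> \<in> G\<close> assms(2,3)] assms(2) unfolding reach_le_def by auto
  then show ?thesis
    using \<open>sg_preceq G F\<close> assms(2) closure_subset unfolding sg_preceq_def by blast
qed

lemma run_Sat_mem_closure_reach_le:
  assumes "\<forall>p\<in>set ps. fst p \<in> Sat F \<and> snd p > 0" and "run ps u = Some v"
  shows "v \<in> closure (insert u (reach_le F u (sum_list (map snd ps))))"
  using assms
proof (induction ps arbitrary: v rule: rev_induct)
  case Nil
  then show ?case
    using closure_subset by fastforce
next
  case (snoc p ps)
  obtain \<Phi> \<tau> where p: "p = (\<Phi>, \<tau>)"
    by (cases p)
  let ?s = "sum_list (map snd ps)"
  let ?R = "closure (insert u (reach_le F u (?s + \<tau>)))"
  have "\<Phi> \<in> Sat F" "\<tau> > 0"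
    using snoc.prems(1) p by auto
  obtain x where x: "run ps u = Some x" "\<Phi> \<tau> x = Some v"
    using snoc.prems(2) unfolding p run_append by (auto split: option.splits)
  have "x \<in> closure (insert u (reach_le F u ?s))"
    using snoc.IH snoc.prems(1) x(1) by auto
  then have v: "v \<in> closure {v'. \<exists>x'\<in>insert u (reach_le F u ?s). \<Phi> \<tau> x' = Some v'}"
    by (rule local_semigroup_closure_image[OF local_semigroup_Sat[OF \<open>\<Phi> \<in> Sat F\<close>]
          less_imp_le[OF \<open>\<tau> > 0\<close>] _ x(2)])
  have "?s \<ge> 0"
    using snoc.prems(1) by (intro sum_list_nonneg) auto
  have "closure (reach_le F x' \<tau>) \<subseteq> ?R" if "x' \<in> insert u (reach_le F u ?s)" for x'
    using reach_le_trans[OF that _ \<open>?s \<ge> 0\<close>] by (intro closure_mono) auto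
  then have "{v'. \<exists>x'\<in>insert u (reach_le F u ?s). \<Phi> \<tau> x' = Some v'} \<subseteq> ?R"
    using Sat_flow_mem_closure_reach_le[OF \<open>\<Phi> \<in> Sat F\<close> \<open>\<tau> > 0\<close>] by blast
  then show ?case
    using v closure_minimal[of _ ?R] p by auto
qed

lemma sg_preceq_Sat:
  assumes "F \<subseteq> SG" and "F \<noteq> {}"
  shows "sg_preceq (Sat F) F"
  unfolding sg_preceq_def
proof (intro allI impI closure_minimal)
  fix u and t :: real assume "t > 0"
  show "reach_le (Sat F) u t \<subseteq> closure (reach_le F u t)"
  proof
    fix v assume "v \<in> reach_le (Sat F) u t"
    then obtain ps where ps: "\<forall>p\<in>set ps. fst p \<in> Sat F \<and> snd p > 0"
      "sum_list (map snd ps) \<le> t" "run ps u = Some v"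
      unfolding reach_le_def reach_def by auto
    have "insert u (reach_le F u (sum_list (map snd ps))) \<subseteq> closure (reach_le F u t)"
      using mem_closure_reach_le_self[OF assms \<open>t > 0\<close>] ps(2) closure_subset
      unfolding reach_le_def by fastforce
    then show "v \<in> closure (reach_le F u t)"
      using run_Sat_mem_closure_reach_le[OF ps(1,3)] closure_minimal[OF _ closed_closure] by blast
  qed
qed simp

lemma reach_near_target:
  fixes \<delta> \<rho> :: real
  assumes "\<Phi> \<in> F" and "\<delta> > 0" and "\<delta> \<le> \<rho>" and "ball w \<rho> \<subseteq> V"
    and approach: "\<And>x r. x \<in> V \<Longrightarrow> r > 0 \<Longrightarrow> w \<in> closure (reach_le F x r)"
    and short_flow: "\<And>\<tau> y. 0 \<le> \<tau> \<Longrightarrow> \<tau> \<le> \<delta> \<Longrightarrow> dist w y < \<delta> \<Longrightarrow>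
      \<exists>z. \<Phi> \<tau> y = Some z \<and> dist w z < \<rho>"
    and "x \<in> V" and "0 < r" and "r \<le> real n * \<delta>"
  shows "\<exists>z\<in>reach F x r. dist w z < \<rho>"
  using assms(7-9)
proof (induction n arbitrary: x r)
  case 0
  then show ?case
    using \<open>\<delta> > 0\<close> by simp
next
  case (Suc n)
  obtain y where "y \<in> reach_le F x r" "dist w y < \<delta>"
    using closure_approachableD[OF approach[OF Suc.prems(1,2)] \<open>\<delta> > 0\<close>] by blast
  then obtain s where "0 < s" "s \<le> r" and y: "y \<in> reach F x s"
    unfolding reach_le_def by auto
  consider "s = r" | "s < r" "r - s \<le> \<delta>" | "r - s > \<delta>"
    using \<open>s \<le> r\<close> by linarith
  then show ?case
  proof cases
    case 1
    then show ?thesis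
      using y \<open>dist w y < \<delta>\<close> \<open>\<delta> \<le> \<rho>\<close> by (meson less_le_trans)
  next
    case 2
    then obtain z where z: "\<Phi> (r - s) y = Some z" "dist w z < \<rho>"
      using short_flow[of "r - s" y] \<open>dist w y < \<delta>\<close> by auto
    have "z \<in> reach F y (r - s)"
      using reach_singleton[OF \<open>\<Phi> \<in> F\<close> _ z(1)] 2 by simp
    then have "z \<in> reach F x r"
      using reach_trans[OF y] by fastforce
    then show ?thesis
      using z(2) by blast
  next
    case 3
    obtain z where z: "\<Phi> \<delta> y = Some z" "dist w z < \<rho>"
      using short_flow[of \<delta> y] \<open>dist w y < \<delta>\<close> \<open>\<delta> > 0\<close> by auto
    then have "z \<in> V"
      using \<open>ball w \<rho> \<subseteq> V\<close> by auto
    moreover have "0 < r - s - \<delta>" "r - s - \<delta> \<le> real n * \<delta>"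
      using 3 Suc.prems(3) \<open>0 < s\<close> by (auto simp: algebra_simps)
    ultimately obtain z' where z': "z' \<in> reach F z (r - s - \<delta>)" "dist w z' < \<rho>"
      using Suc.IH by blast
    have "z' \<in> reach F x (s + \<delta> + (r - s - \<delta>))"
      using reach_trans[OF reach_trans[OF y reach_singleton[OF \<open>\<Phi> \<in> F\<close> \<open>\<delta> > 0\<close> z(1)]] z'(1)] .
    then show ?thesis
      using z'(2) by auto
  qed
qed

lemma closure_reach_of_closure_reach_le:
  assumes "F \<subseteq> SG" and "F \<noteq> {}" and "open V"
    and approach: "\<forall>u\<in>V. \<forall>t>0. V \<subseteq> closure (reach_le F u t)"
    and "x \<in> V" and "t > 0"
  shows "V \<subseteq> closure (reach F x t)"
proof
  fix w assume "w \<in> V"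
  show "w \<in> closure (reach F x t)"
    unfolding closure_approachable
  proof (intro allI impI)
    fix e :: real assume "e > 0"
    obtain \<rho>0 where "\<rho>0 > 0" "ball w \<rho>0 \<subseteq> V"
      using \<open>open V\<close> \<open>w \<in> V\<close> open_contains_ball by blast
    define \<rho> where "\<rho> = min \<rho>0 e"
    have "\<rho> > 0" "\<rho> \<le> e" "ball w \<rho> \<subseteq> V"
      using \<open>\<rho>0 > 0\<close> \<open>e > 0\<close> \<open>ball w \<rho>0 \<subseteq> V\<close> unfolding \<rho>_def by auto
    obtain \<Phi> where "\<Phi> \<in> F"
      using assms(2) by blast
    then have "local_semigroup \<Phi>"
      using assms(1) unfolding SG_def by blast
    then obtain \<delta>0 where "\<delta>0 > 0" and \<delta>0:
      "\<And>\<tau> y. 0 \<le> \<tau> \<Longrightarrow> \<tau> < \<delta>0 \<Longrightarrow> dist w y < \<delta>0 \<Longrightarrow> \<exists>z. \<Phi> \<tau> y = Some z \<and> dist w z < \<rho>"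
      using local_semigroup_near_start \<open>\<rho> > 0\<close> by blast
    define \<delta> where "\<delta> = min (\<delta>0 / 2) \<rho>"
    have "\<delta> > 0" "\<delta> \<le> \<rho>"
      using \<open>\<delta>0 > 0\<close> \<open>\<rho> > 0\<close> unfolding \<delta>_def by auto
    obtain n where "t / \<delta> < real n"
      using reals_Archimedean2 by blast
    then have "t \<le> real n * \<delta>"
      using \<open>\<delta> > 0\<close> by (simp add: divide_less_eq)
    moreover have "\<exists>z. \<Phi> \<tau> y = Some z \<and> dist w z < \<rho>"
      if "0 \<le> \<tau>" "\<tau> \<le> \<delta>" "dist w y < \<delta>" for \<tau> y
      using \<delta>0 that \<open>\<delta>0 > 0\<close> unfolding \<delta>_def by auto
    moreover have "w \<in> closure (reach_le F x' r)" if "x' \<in> V" "r > 0" for x' r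
      using approach that \<open>w \<in> V\<close> by blast
    ultimately obtain z where "z \<in> reach F x t" "dist w z < \<rho>"
      using reach_near_target[OF \<open>\<Phi> \<in> F\<close> \<open>\<delta> > 0\<close> \<open>\<delta> \<le> \<rho>\<close> \<open>ball w \<rho> \<subseteq> V\<close> _ _ \<open>x \<in> V\<close> \<open>t > 0\<close>]
      by blast
    then show "\<exists>y\<in>reach F x t. dist y w < e"
      using \<open>\<rho> \<le> e\<close> by (metis dist_commute less_le_trans)
  qed
qed

theorem lemma3p5:
  fixes F :: "('a::metric_space) lsg set"
  assumes "F \<subseteq> SG" and "F \<noteq> {}"
  shows "(\<forall>V. open V \<and> (\<forall>u\<in>V. \<forall>t>0. V \<subseteq> closure (reach_le F u t)) \<longrightarrow>
              (\<forall>u\<in>V. \<forall>t>0. V \<subseteq> closure (reach F u t)))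
       \<and> ((\<forall>u t. t > 0 \<longrightarrow> closure (reach_le (Sat F) u t) = UNIV) \<longrightarrow>
              (\<forall>u t. t > 0 \<longrightarrow> closure (reach F u t) = UNIV))"
proof (intro conjI allI impI ballI)
  fix V u and t :: real
  assume "open V \<and> (\<forall>u\<in>V. \<forall>t>0. V \<subseteq> closure (reach_le F u t))" "u \<in> V" "t > 0"
  then show "V \<subseteq> closure (reach F u t)"
    using closure_reach_of_closure_reach_le[OF assms] by blast
next
  fix u and t :: real
  assume dense_Sat: "\<forall>u t. t > 0 \<longrightarrow> closure (reach_le (Sat F) u t) = UNIV" and "t > 0"
  have "\<forall>u. \<forall>t>0. UNIV \<subseteq> closure (reach_le F u t)"
    using sg_preceq_Sat[OF assms] dense_Sat unfolding sg_preceq_def by metis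
  then show "closure (reach F u t) = UNIV"
    using closure_reach_of_closure_reach_le[OF assms open_UNIV _ UNIV_I \<open>t > 0\<close>] by blast
qed

end
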